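(* For the representation of a symmetric subgroup $T_m(\mathbb{C})\le G\le\mathrm{GL}_m(\mathbb{C})$ on $\mathbb{C}^{m\times n}\otimes\mathbb{C}^{n\times m}$ given by $X\cdot(A\otimes B)=XA\otimes BX^{-1}$, the weight norm equals $N_l=\sqrt2$ and the weight margin satisfies $\gamma_l\ge m^{-3/2}$.
   Context: $T_m(\mathbb{C})$: invertible diagonal matrices; symmetric: Zariski closed and closed under conjugate transposition. For a rational representation $\pi$ of $G$ with weight set $\Omega(\pi)\subset\mathbb{Z}^m$ (the characters $\omega$ such that $\mathrm{diag}(t)$ acts on a weight vector by $t_1^{\omega_1}\cdots t_m^{\omega_m}$), the weight norm is $N(\pi)=\max_{\omega\in\Omega(\pi)}\|\omega\|_2$ and the weight margin is $\gamma(\pi)=\min\{\mathrm{dist}(0,\mathrm{conv}(S)):S\subseteq\Omega(\pi),\ 0\notin\mathrm{conv}(S)\}$, where $\mathrm{dist}(0,\mathrm{conv}(S))$ is the Euclidean distance from the origin to the convex hull. *)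

theory Defs
  imports "HOL-Analysis.Analysis"
begin

definition diag_mat :: "complex^'m \<Rightarrow> complex^'m^'m" where
  "diag_mat t = (\<chi> i j. if i = j then t $ i else 0)"

text \<open>Elements of C^(m x n) (x) C^(n x m), in the standard basis E_ik (x) E_lj,
  as arrays T i k l j.  Action of X in GL_m extended linearly from
  X.(A (x) B) = XA (x) B X^{-1}.\<close>
type_synonym ('m, 'n) tens = "'m \<Rightarrow> 'n \<Rightarrow> 'n \<Rightarrow> 'm \<Rightarrow> complex"

definition tens_act :: "complex^'m^'m \<Rightarrow> ('m::finite, 'n) tens \<Rightarrow> ('m, 'n) tens" where
  "tens_act X T = (\<lambda>i k l j. \<Sum>i'\<in>UNIV. \<Sum>j'\<in>UNIV.
       X $ i $ i' * T i' k l j' * (matrix_inv X) $ j' $ j)"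

definition weights :: "('m::finite, 'n::finite) tens itself \<Rightarrow> (int^'m) set" where
  "weights _ = {\<omega>. \<exists>T :: ('m, 'n) tens. T \<noteq> (\<lambda>i k l j. 0) \<and>
      (\<forall>t :: complex^'m. (\<forall>i. t $ i \<noteq> 0) \<longrightarrow>
         tens_act (diag_mat t) T = (\<lambda>i k l j. (\<Prod>a\<in>UNIV. t $ a powi (\<omega> $ a)) * T i k l j))}"

definition real_of_weight :: "int^'m \<Rightarrow> real^'m" where
  "real_of_weight \<omega> = (\<chi> i. real_of_int (\<omega> $ i))"

definition weight_norm :: "('m::finite, 'n::finite) tens itself \<Rightarrow> real" where
  "weight_norm x = Max ((\<lambda>\<omega>. norm (real_of_weight \<omega>)) ` weights x)"

definition weight_margin :: "('m::finite, 'n::finite) tens itself \<Rightarrow> real" where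
  "weight_margin x = Min {infdist 0 (convex hull (real_of_weight ` S)) | S.
      S \<subseteq> weights x \<and> S \<noteq> {} \<and> 0 \<notin> convex hull (real_of_weight ` S)}"

end

theory Submission
  imports Defs
begin

text \<open>The diagonal torus acts on the basis tensor indexed by \<open>(i, k, l, j)\<close> by the character
  \<open>t\<^sub>i / t\<^sub>j\<close>, so the weights are exactly the vectors \<open>e\<^sub>i - e\<^sub>j\<close>; those with
  \<open>i \<noteq> j\<close> have norm \<open>\<surd>2\<close>.  If \<open>0\<close> is not in the convex hull of a set \<open>S\<close> of such weights,
  a separating functional \<open>y\<close> has \<open>y\<^sub>i > y\<^sub>j\<close> for every \<open>e\<^sub>i - e\<^sub>j \<in> S\<close>.  Replacing \<open>y\<close> by
  the rank vector \<open>r\<^sub>a = #{k. y\<^sub>k < y\<^sub>a}\<close> keeps this order but now \<open>r\<^sub>i - r\<^sub>j \<ge> 1\<close>, so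
  \<open>\<langle>r, x\<rangle> \<ge> 1\<close> on the convex hull, while \<open>\<parallel>r\<parallel> \<le> m\<^sup>3\<^sup>/\<^sup>2\<close>; by Cauchy--Schwarz the hull has
  distance at least \<open>m\<^sup>-\<^sup>3\<^sup>/\<^sup>2\<close> from the origin.\<close>

lemma matrix_inv_unique:
  fixes A :: "'a::semiring_1^'n^'m"
  assumes "A ** B = mat 1" "B ** A = mat 1"
  shows "matrix_inv A = B"
proof -
  have inv: "A ** matrix_inv A = mat 1" "matrix_inv A ** A = mat 1"
    using someI_ex[of "\<lambda>C. A ** C = mat 1 \<and> C ** A = mat 1"] assms
    unfolding matrix_inv_def by blast+
  have "matrix_inv A = matrix_inv A ** (A ** B)" using assms by simp
  also have "\<dots> = B" using inv by (simp add: matrix_mul_assoc)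
  finally show ?thesis .
qed

lemma matrix_inv_diag_mat:
  assumes "\<forall>i. t $ i \<noteq> 0"
  shows "matrix_inv (diag_mat t) = diag_mat (\<chi> i. inverse (t $ i))"
  using assms by (intro matrix_inv_unique)
    (simp_all add: diag_mat_def matrix_matrix_mult_def mat_def vec_eq_iff
      if_distrib[of "\<lambda>x. x * _"] cong: if_cong)

lemma tens_act_diag_mat:
  assumes "\<forall>i. t $ i \<noteq> 0"
  shows "tens_act (diag_mat t) T = (\<lambda>i k l j. t $ i * T i k l j * inverse (t $ j))"
  unfolding tens_act_def matrix_inv_diag_mat[OF assms]
  by (simp add: diag_mat_def if_distrib[of "\<lambda>x. x * _"] if_distrib[of "\<lambda>x. _ * x"]
       cong: if_cong)

definition torus_char :: "int^'m \<Rightarrow> complex^'m::finite \<Rightarrow> complex" where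
  "torus_char \<omega> t = (\<Prod>a\<in>UNIV. t $ a powi (\<omega> $ a))"

lemma weights_iff_torus_char:
  "\<omega> \<in> weights TYPE(('m::finite, 'n::finite) tens) \<longleftrightarrow>
    (\<exists>T :: ('m, 'n) tens. T \<noteq> (\<lambda>i k l j. 0) \<and>
      (\<forall>t. (\<forall>i. t $ i \<noteq> 0) \<longrightarrow>
         (\<forall>i k l j. t $ i * T i k l j * inverse (t $ j) = torus_char \<omega> t * T i k l j)))"
  unfolding weights_def torus_char_def by (simp add: tens_act_diag_mat fun_eq_iff cong: imp_cong)

lemma power_int_inject:
  fixes a :: "'a::linordered_field"
  assumes "1 < a"
  shows "a powi m = a powi n \<longleftrightarrow> m = n"
  using power_int_strict_increasing[OF _ assms, of m n] power_int_strict_increasing[OF _ assms, of n m]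
  by (cases m n rule: linorder_cases) auto

lemma torus_char_inject:
  assumes "\<And>t. \<forall>i. t $ i \<noteq> 0 \<Longrightarrow> torus_char \<omega> t = torus_char \<omega>' t"
  shows "\<omega> = \<omega>'"
proof -
  have "\<omega> $ b = \<omega>' $ b" for b
  proof -
    define t :: "complex^'a" where "t = (\<chi> a. if a = b then 2 else 1)"
    have char_t: "torus_char \<nu> t = 2 powi (\<nu> $ b)" for \<nu>
      by (simp add: torus_char_def t_def if_distrib[of "\<lambda>x. x powi _"] cong: if_cong)
    have "\<forall>i. t $ i \<noteq> 0" by (simp add: t_def)
    then have "(2::complex) powi (\<omega> $ b) = 2 powi (\<omega>' $ b)"
      using assms by (simp flip: char_t)
    then have "norm ((2::complex) powi (\<omega> $ b)) = norm ((2::complex) powi (\<omega>' $ b))"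
      by simp
    then show ?thesis by (simp add: norm_power_int power_int_inject)
  qed
  then show ?thesis by (simp add: vec_eq_iff)
qed

definition root_weight :: "'m \<Rightarrow> 'm \<Rightarrow> int^'m" where
  "root_weight i j = (\<chi> a. (if a = i then 1 else 0) - (if a = j then 1 else 0))"

lemma torus_char_root_weight:
  assumes "\<forall>i. t $ i \<noteq> 0"
  shows "torus_char (root_weight i j) t = t $ i * inverse (t $ j)"
proof (cases "i = j")
  case True
  then show ?thesis using assms by (simp add: torus_char_def root_weight_def)
next
  case False
  have "torus_char (root_weight i j) t =
      (\<Prod>a\<in>UNIV. (if a = i then t $ i else 1) * (if a = j then inverse (t $ j) else 1))"
    unfolding torus_char_def using False
    by (intro prod.cong) (auto simp: root_weight_def power_int_minus)
  also have "\<dots> = t $ i * inverse (t $ j)" by (simp add: prod.distrib)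
  finally show ?thesis .
qed

lemma weights_tens: "weights TYPE(('m::finite, 'n::finite) tens) = range (case_prod root_weight)"
proof (intro equalityI subsetI)
  fix \<omega> assume "\<omega> \<in> weights TYPE(('m, 'n) tens)"
  then obtain T :: "('m, 'n) tens" where "T \<noteq> (\<lambda>i k l j. 0)" and
    eigen: "\<And>t i k l j. \<forall>i. t $ i \<noteq> 0 \<Longrightarrow>
      t $ i * T i k l j * inverse (t $ j) = torus_char \<omega> t * T i k l j"
    unfolding weights_iff_torus_char by blast
  then obtain i k l j where nz: "T i k l j \<noteq> 0" by (meson ext)
  have "torus_char (root_weight i j) t = torus_char \<omega> t" if "\<forall>i. t $ i \<noteq> 0" for t
  proof -
    have "t $ i * inverse (t $ j) * T i k l j = torus_char \<omega> t * T i k l j"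
      using eigen[OF that, of i k l j] by (simp add: ac_simps)
    then show ?thesis using nz by (simp add: torus_char_root_weight[OF that])
  qed
  then have "\<omega> = root_weight i j" by (intro torus_char_inject) simp
  then show "\<omega> \<in> range (case_prod root_weight)" by auto
next
  fix \<omega> :: "int^'m" assume "\<omega> \<in> range (case_prod root_weight)"
  then obtain i j where \<omega>: "\<omega> = root_weight i j" by auto
  define T :: "('m, 'n) tens" where "T = (\<lambda>i' k l j'. if i' = i \<and> j' = j then 1 else 0)"
  have "T \<noteq> (\<lambda>i k l j. 0)" by (auto simp: T_def fun_eq_iff)
  moreover have "t $ i' * T i' k l j' * inverse (t $ j') = torus_char \<omega> t * T i' k l j'"
    if "\<forall>i. t $ i \<noteq> 0" for t i' k l j'
    by (simp add: \<omega> torus_char_root_weight[OF that] T_def)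
  ultimately show "\<omega> \<in> weights TYPE(('m, 'n) tens)"
    unfolding weights_iff_torus_char by blast
qed

lemma real_of_weight_root_weight:
  "real_of_weight (root_weight i j) = (\<chi> a. (if a = i then 1 else 0) - (if a = j then 1 else 0))"
  by (simp add: real_of_weight_def root_weight_def vec_eq_iff)

lemma inner_real_of_root_weight: "y \<bullet> real_of_weight (root_weight i j) = y $ i - y $ j"
  unfolding real_of_weight_root_weight inner_vec_def
  by (simp add: right_diff_distrib sum_subtractf if_distrib[of "\<lambda>x. _ * x"] cong: if_cong)

lemma norm_real_of_root_weight:
  "norm (real_of_weight (root_weight i j)) = (if i = j then 0 else sqrt 2)"
proof -
  have "(norm (real_of_weight (root_weight i j)))\<^sup>2 = (if i = j then 0 else 2)"
    unfolding power2_norm_eq_inner inner_real_of_root_weight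
    by (simp add: real_of_weight_root_weight)
  then show ?thesis by (metis norm_ge_zero real_sqrt_abs real_sqrt_zero abs_of_nonneg)
qed

definition rank_vec :: "real^'n \<Rightarrow> real^'n::finite" where
  "rank_vec y = (\<chi> a. real (card {k. y $ k < y $ a}))"

lemma rank_vec_diff_ge_one:
  assumes "y $ j < y $ i"
  shows "1 \<le> rank_vec y $ i - rank_vec y $ j"
proof -
  have "{k. y $ k < y $ j} \<subset> {k. y $ k < y $ i}" using assms by auto
  then have "card {k. y $ k < y $ j} < card {k. y $ k < y $ i}" by (intro psubset_card_mono) auto
  then show ?thesis unfolding rank_vec_def by simp
qed

lemma norm_rank_vec_le: "norm (rank_vec y) \<le> real CARD('n) powr (3/2)"
  for y :: "real^'n::finite"
proof -
  define m where "m = real CARD('n)"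
  have "m > 0" unfolding m_def by simp
  have entry_le: "rank_vec y $ a \<le> m" for a
    unfolding rank_vec_def m_def by (simp add: card_mono)
  have "(norm (rank_vec y))\<^sup>2 = (\<Sum>a\<in>UNIV. (rank_vec y $ a)\<^sup>2)"
    unfolding power2_norm_eq_inner inner_vec_def by (simp add: power2_eq_square)
  also have "\<dots> \<le> (\<Sum>a\<in>(UNIV::'n set). m\<^sup>2)"
    using entry_le by (intro sum_mono power_mono) (auto simp: rank_vec_def)
  also have "\<dots> = m powr 3"
    using \<open>m > 0\<close> by (simp add: m_def power2_eq_square power3_eq_cube)
  also have "\<dots> = (m powr (3/2))\<^sup>2"
    using \<open>m > 0\<close> by (simp add: powr_power)
  finally show ?thesis unfolding m_def by (rule power2_le_imp_le) simp
qed

lemma infdist_zero_ge_if_halfspace: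
  fixes r :: "'a::real_inner"
  assumes "C \<noteq> {}" "\<And>x. x \<in> C \<Longrightarrow> 1 \<le> r \<bullet> x" "norm r \<le> M"
  shows "1 / M \<le> infdist 0 C"
proof -
  have dist_ge: "1 \<le> M * dist 0 x" if "x \<in> C" for x
  proof -
    have "1 \<le> r \<bullet> x" using assms(2) that .
    also have "\<dots> \<le> norm r * norm x" by (rule norm_cauchy_schwarz)
    also have "\<dots> \<le> M * dist 0 x" using assms(3) by (simp add: mult_right_mono)
    finally show ?thesis .
  qed
  obtain x where "x \<in> C" using assms(1) by blast
  have "M > 0"
  proof (rule ccontr)
    assume "\<not> M > 0"
    then have "M * dist 0 x \<le> 0" by (simp add: mult_nonpos_nonneg)
    with dist_ge[OF \<open>x \<in> C\<close>] show False by linarith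
  qed
  then have lower: "1 / M \<le> dist 0 x" if "x \<in> C" for x
    using dist_ge[OF that] by (simp add: pos_divide_le_eq mult.commute)
  show ?thesis
    unfolding infdist_notempty[OF assms(1)] by (rule cINF_greatest[OF assms(1) lower])
qed

lemma infdist_convex_hull_root_weights_ge:
  fixes S :: "(int^'m::finite) set"
  assumes "S \<subseteq> range (case_prod root_weight)" "S \<noteq> {}"
    and "0 \<notin> convex hull (real_of_weight ` S)"
  shows "1 / real CARD('m) powr (3/2) \<le> infdist 0 (convex hull (real_of_weight ` S))"
proof -
  have "finite S" using assms(1) by (rule finite_subset) simp
  then have "closed (convex hull (real_of_weight ` S))"
    by (simp add: compact_imp_closed finite_imp_compact_convex_hull)
  then obtain y :: "real^'m" and b where "0 < b" and sep: "\<forall>x \<in> convex hull (real_of_weight ` S). b < y \<bullet> x"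
    using separating_hyperplane_closed_0 assms(3) by (metis convex_convex_hull)
  have "1 \<le> rank_vec y \<bullet> x" if "x \<in> real_of_weight ` S" for x
  proof -
    obtain i j where x: "x = real_of_weight (root_weight i j)" using \<open>x \<in> _\<close> assms(1) by auto
    have "x \<in> convex hull (real_of_weight ` S)" using that by (rule hull_inc)
    then have "b < y \<bullet> x" using sep by blast
    then have "y $ j < y $ i" using \<open>0 < b\<close> by (simp add: x inner_real_of_root_weight)
    then show ?thesis unfolding x inner_real_of_root_weight by (rule rank_vec_diff_ge_one)
  qed
  then have "convex hull (real_of_weight ` S) \<subseteq> {x. 1 \<le> rank_vec y \<bullet> x}"
    by (intro hull_minimal convex_halfspace_ge) auto
  then show ?thesis
    using assms(2) by (intro infdist_zero_ge_if_halfspace[OF _ _ norm_rank_vec_le]) auto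
qed

lemma exists_distinct_pair:
  assumes "CARD('m::finite) \<ge> 2"
  obtains i j where "i \<noteq> (j::'m)"
proof -
  have "\<not> card (UNIV :: 'm set) \<le> Suc 0" using assms by simp
  then obtain i j :: 'm where "i \<noteq> j"
    by (meson card_le_Suc0_iff_eq finite UNIV_I)
  then show ?thesis by (rule that)
qed

lemma root_weight_in_range: "root_weight i j \<in> range (case_prod root_weight)"
  by (rule range_eqI[of _ _ "(i, j)"]) simp

lemma weight_norm_tens:
  assumes "CARD('m::finite) \<ge> 2"
  shows "weight_norm TYPE(('m, 'n::finite) tens) = sqrt 2"
proof -
  let ?norms = "(\<lambda>\<omega>. norm (real_of_weight \<omega>)) ` range (case_prod root_weight :: 'm \<times> 'm \<Rightarrow> _)"
  obtain i j :: 'm where "i \<noteq> j" using exists_distinct_pair assms by blast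
  then have "norm (real_of_weight (root_weight i j)) = sqrt 2"
    by (simp add: norm_real_of_root_weight)
  then have "sqrt 2 \<in> ?norms"
    by (rule image_eqI[OF sym root_weight_in_range])
  moreover have "x \<le> sqrt 2" if "x \<in> ?norms" for x
    using that by (clarsimp simp: norm_real_of_root_weight)
  ultimately have "Max ?norms = sqrt 2"
    by (intro Max_eqI) simp_all
  then show ?thesis
    unfolding weight_norm_def weights_tens .
qed

lemma weight_margin_tens_ge:
  assumes "CARD('m::finite) \<ge> 2"
  shows "1 / real CARD('m) powr (3/2) \<le> weight_margin TYPE(('m, 'n::finite) tens)"
proof -
  define dist_hull where "dist_hull S = infdist 0 (convex hull (real_of_weight ` S))"
    for S :: "(int^'m) set"
  define dists where "dists = {dist_hull S | S.
      S \<subseteq> range (case_prod root_weight) \<and> S \<noteq> {} \<and> 0 \<notin> convex hull (real_of_weight ` S)}"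
  have margin: "weight_margin TYPE(('m, 'n) tens) = Min dists"
    unfolding weight_margin_def weights_tens dists_def dist_hull_def ..
  obtain i j :: 'm where "i \<noteq> j" using exists_distinct_pair assms by blast
  then have "0 \<notin> convex hull (real_of_weight ` {root_weight i j})"
    using norm_real_of_root_weight[of i j] by auto
  then have "dist_hull {root_weight i j} \<in> dists"
    unfolding dists_def mem_Collect_eq using root_weight_in_range[of i j]
    by (intro exI[of _ "{root_weight i j}"]) simp
  then have "dists \<noteq> {}" by blast
  moreover have "finite dists"
  proof (rule finite_subset)
    show "dists \<subseteq> dist_hull ` Pow (range (case_prod root_weight))"
      unfolding dists_def by auto
  qed simp
  moreover have "1 / real CARD('m) powr (3/2) \<le> d" if d: "d \<in> dists" for d
  proof -
    obtain S where "d = dist_hull S" "S \<subseteq> range (case_prod root_weight)" "S \<noteq> {}"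
        "0 \<notin> convex hull (real_of_weight ` S)"
      using d unfolding dists_def by blast
    then show ?thesis
      unfolding dist_hull_def by (simp add: infdist_convex_hull_root_weights_ge)
  qed
  ultimately show ?thesis
    unfolding margin by simp
qed

theorem mainTheorem12:
  assumes "CARD('m::finite) \<ge> 2"
  shows "weight_norm TYPE(('m, 'n::finite) tens) = sqrt 2
       \<and> weight_margin TYPE(('m, 'n) tens) \<ge> 1 / real CARD('m) powr (3/2)"
  using weight_norm_tens[OF assms] weight_margin_tens_ge[OF assms] by blast

end
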